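(* For any $i\in[n]$, the number of classical parking functions $p\in\mathrm{PF}_n$ whose classical outcome is $\mathrm{Inc}_i^n:=i(i+1)\cdots n\,12\cdots(i-1)$ equals $(n+1-i)!\,(i-1)!$.
   Context: $[n]=\{1,\dots,n\}$; permutations of $[n]$ are written in one-line notation. A parking preference is $p=(p_1,\dots,p_n)\in[n]^n$. Classical parking process: cars $1,\dots,n$ enter in order into spots $1,\dots,n$, initially unoccupied; car $i$ parks in the first unoccupied spot $k\ge p_i$ and fails if there is none. $\mathrm{PF}_n$ is the set of $p$ for which all cars park; the classical outcome of $p$ is the permutation $\pi$ with $\pi_k$ the car in spot $k$ at the end. *)

theory Defs
  imports Main "HOL-Library.FuncSet"
begin

text \<open>Parking configuration: a function from spots to cars, where 0 means
  "unoccupied". Spots are 1..n, cars are 1..n. A preference p is a function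
  on cars 1..n with values in 1..n.\<close>

fun park :: "nat \<Rightarrow> (nat \<Rightarrow> nat) \<Rightarrow> nat \<Rightarrow> (nat \<Rightarrow> nat) option" where
  "park n p 0 = Some (\<lambda>k. 0)"
| "park n p (Suc m) =
     (case park n p m of
        None \<Rightarrow> None
      | Some occ \<Rightarrow>
          (if (\<exists>k. p (Suc m) \<le> k \<and> k \<le> n \<and> occ k = 0)
           then Some (occ((LEAST k. p (Suc m) \<le> k \<and> k \<le> n \<and> occ k = 0) := Suc m))
           else None))"

definition prefs :: "nat \<Rightarrow> (nat \<Rightarrow> nat) set" where
  "prefs n = ({1..n} \<rightarrow>\<^sub>E {1..n})"

definition PF :: "nat \<Rightarrow> (nat \<Rightarrow> nat) set" where
  "PF n = {p \<in> prefs n. park n p n \<noteq> None}"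

definition outcome :: "nat \<Rightarrow> (nat \<Rightarrow> nat) \<Rightarrow> (nat \<Rightarrow> nat)" where
  "outcome n p = the (park n p n)"

text \<open>The permutation Inc_i^n = i (i+1) ... n 1 2 ... (i-1) in one-line notation,
  as a function spot \<mapsto> entry (0 outside 1..n).\<close>
definition Inc :: "nat \<Rightarrow> nat \<Rightarrow> (nat \<Rightarrow> nat)" where
  "Inc n i k = (if 1 \<le> k \<and> k \<le> n + 1 - i then i + k - 1
                else if n + 1 - i < k \<and> k \<le> n then k - (n + 1 - i) else 0)"

end

theory Submission imports Defs begin

text \<open>When the outcome is \<open>Inc\<^sub>i\<^sup>n\<close>, cars park one after another exactly
  into their final spots, so after car \<open>t\<close> the occupied spots are those of cars \<open>1..t\<close>.
  Car \<open>c\<close> lands in its spot \<open>s\<close> precisely when every spot from its preference up to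
  \<open>s - 1\<close> is already taken and \<open>s\<close> is free; the occupied block ending at \<open>s - 1\<close> has
  length \<open>c - 1\<close> for \<open>c < i\<close> (cars \<open>1..c-1\<close> fill the spots after \<open>n + 1 - i\<close>)
  and length \<open>c - i\<close> for \<open>c \<ge> i\<close>. Hence car \<open>c\<close> has \<open>c\<close>, resp. \<open>c + 1 - i\<close>, admissible
  preferences, independently of the other cars, and the count is the product
  \<open>(i - 1)! (n + 1 - i)!\<close>.\<close>

definition Inc_upto :: "nat \<Rightarrow> nat \<Rightarrow> nat \<Rightarrow> nat \<Rightarrow> nat" where
  "Inc_upto n i t k = (if Inc n i k \<le> t then Inc n i k else 0)"

definition Inc_spot :: "nat \<Rightarrow> nat \<Rightarrow> nat \<Rightarrow> nat" where
  "Inc_spot n i c = (if c < i then n + 1 - i + c else c + 1 - i)"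

definition Inc_prefs :: "nat \<Rightarrow> nat \<Rightarrow> nat \<Rightarrow> nat set" where
  "Inc_prefs n i c = (if c < i then {n + 1 - i + 1 .. n + 1 - i + c} else {1 .. c + 1 - i})"

lemma Inc_Inc_spot:
  "\<lbrakk>1 \<le> i; i \<le> n; 1 \<le> c; c \<le> n\<rbrakk> \<Longrightarrow> Inc n i (Inc_spot n i c) = c"
  unfolding Inc_def Inc_spot_def by auto

lemma Inc_eq_imp_Inc_spot:
  "\<lbrakk>1 \<le> i; i \<le> n; Inc n i k = c; 1 \<le> c\<rbrakk> \<Longrightarrow> k = Inc_spot n i c"
  unfolding Inc_def Inc_spot_def by (auto split: if_splits)

lemma Inc_upto_n: "Inc_upto n i n = Inc n i"
  by (auto simp: Inc_upto_def Inc_def fun_eq_iff)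

lemma Inc_upto_Suc:
  assumes "1 \<le> i" "i \<le> n" "Suc t \<le> n"
  shows "Inc_upto n i (Suc t) = (Inc_upto n i t)(Inc_spot n i (Suc t) := Suc t)"
proof
  fix k
  show "Inc_upto n i (Suc t) k = ((Inc_upto n i t)(Inc_spot n i (Suc t) := Suc t)) k"
  proof (cases "k = Inc_spot n i (Suc t)")
    case True
    then show ?thesis using Inc_Inc_spot[of i n "Suc t"] assms by (simp add: Inc_upto_def)
  next
    case False
    then have "Inc n i k \<noteq> Suc t" using Inc_eq_imp_Inc_spot[of i n k "Suc t"] assms by auto
    with False show ?thesis by (auto simp: Inc_upto_def le_Suc_eq)
  qed
qed

lemma ex_Least_eq_iff:
  "((\<exists>k. P k) \<and> (LEAST k::'a::wellorder. P k) = s) \<longleftrightarrow> P s \<and> (\<forall>k<s. \<not> P k)"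
  by (metis LeastI Least_equality not_less_Least linorder_not_less)

lemma first_free_spot_eq_Inc_spot_iff:
  assumes "1 \<le> i" "i \<le> n" "Suc t \<le> n" "1 \<le> q"
  shows "((\<exists>k. q \<le> k \<and> k \<le> n \<and> Inc_upto n i t k = 0) \<and>
          (LEAST k. q \<le> k \<and> k \<le> n \<and> Inc_upto n i t k = 0) = Inc_spot n i (Suc t))
         \<longleftrightarrow> q \<in> Inc_prefs n i (Suc t)"
  unfolding ex_Least_eq_iff Inc_upto_def Inc_def Inc_spot_def Inc_prefs_def
  using assms by (cases "Suc t < i") (auto, (drule spec[of _ q], auto)+)

lemma fun_upd_eq_Inc_upto_Suc:
  assumes "1 \<le> i" "i \<le> n" "Suc t \<le> n" "conf L = 0"
    and upd: "conf(L := Suc t) = Inc_upto n i (Suc t)"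
  shows "conf = Inc_upto n i t \<and> L = Inc_spot n i (Suc t)"
proof -
  have "Inc_upto n i (Suc t) L = Suc t" using upd by (metis fun_upd_same)
  then have Inc_L: "Inc n i L = Suc t" by (auto simp: Inc_upto_def split: if_splits)
  then have L: "L = Inc_spot n i (Suc t)" using Inc_eq_imp_Inc_spot assms by auto
  have "conf = (conf(L := Suc t))(L := 0)" using \<open>conf L = 0\<close> by auto
  also have "\<dots> = (Inc_upto n i t)(L := 0)"
    using upd Inc_upto_Suc[OF assms(1-3)] L by simp
  also have "\<dots> = Inc_upto n i t" using Inc_L by (auto simp: Inc_upto_def)
  finally show ?thesis using L by simp
qed

lemma park_eq_Inc_upto_iff:
  assumes "1 \<le> i" "i \<le> n" "p \<in> prefs n"
  shows "t \<le> n \<Longrightarrow> park n p t = Some (Inc_upto n i t) \<longleftrightarrow> (\<forall>c\<in>{1..t}. p c \<in> Inc_prefs n i c)"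
proof (induction t)
  case 0
  then show ?case by (auto simp: Inc_upto_def Inc_def fun_eq_iff)
next
  case (Suc t)
  have "1 \<le> p (Suc t)" using assms(3) Suc.prems by (auto simp: prefs_def)
  note first_free = first_free_spot_eq_Inc_spot_iff[OF assms(1,2) Suc.prems this]
  show ?case
  proof
    assume parked: "park n p (Suc t) = Some (Inc_upto n i (Suc t))"
    then obtain conf where conf: "park n p t = Some conf"
      by (cases "park n p t") auto
    let ?Q = "\<lambda>k. p (Suc t) \<le> k \<and> k \<le> n \<and> conf k = 0"
    have ex: "\<exists>k. ?Q k" using parked conf by (auto split: if_splits)
    have "conf((LEAST k. ?Q k) := Suc t) = Inc_upto n i (Suc t)"
      using parked conf ex by auto
    moreover have "conf (LEAST k. ?Q k) = 0" using LeastI_ex[OF ex] by blast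
    ultimately have prev: "conf = Inc_upto n i t" "(LEAST k. ?Q k) = Inc_spot n i (Suc t)"
      using fun_upd_eq_Inc_upto_Suc[OF assms(1,2) Suc.prems] by blast+
    then have "\<forall>c\<in>{1..t}. p c \<in> Inc_prefs n i c" using Suc.IH Suc.prems conf by auto
    moreover have "p (Suc t) \<in> Inc_prefs n i (Suc t)" using first_free ex prev by auto
    ultimately show "\<forall>c\<in>{1..Suc t}. p c \<in> Inc_prefs n i c" by (auto simp: le_Suc_eq)
  next
    assume "\<forall>c\<in>{1..Suc t}. p c \<in> Inc_prefs n i c"
    then show "park n p (Suc t) = Some (Inc_upto n i (Suc t))"
      using Suc first_free Inc_upto_Suc[OF assms(1,2) Suc.prems] by auto
  qed
qed

lemma PF_outcome_Inc_eq_PiE: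
  assumes "1 \<le> i" "i \<le> n"
  shows "{p \<in> PF n. outcome n p = Inc n i} = PiE {1..n} (Inc_prefs n i)"
proof -
  have prefs_sub: "Inc_prefs n i c \<subseteq> {1..n}" if "c \<in> {1..n}" for c
    using assms that by (auto simp: Inc_prefs_def)
  have "p \<in> {p \<in> PF n. outcome n p = Inc n i} \<longleftrightarrow> p \<in> PiE {1..n} (Inc_prefs n i)" for p
  proof -
    have "p \<in> {p \<in> PF n. outcome n p = Inc n i} \<longleftrightarrow>
          p \<in> prefs n \<and> park n p n = Some (Inc_upto n i n)"
      by (auto simp: PF_def outcome_def Inc_upto_n)
    also have "\<dots> \<longleftrightarrow> p \<in> prefs n \<and> (\<forall>c\<in>{1..n}. p c \<in> Inc_prefs n i c)"
      using park_eq_Inc_upto_iff[OF assms] by blast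
    also have "\<dots> \<longleftrightarrow> p \<in> PiE {1..n} (Inc_prefs n i)"
      using prefs_sub by (auto simp: prefs_def PiE_iff) (meson atLeastAtMost_iff subsetD)+
    finally show ?thesis .
  qed
  then show ?thesis by blast
qed

lemma prod_card_Inc_prefs:
  assumes "1 \<le> i" "i \<le> n"
  shows "(\<Prod>c\<in>{1..n}. card (Inc_prefs n i c)) = fact (n + 1 - i) * fact (i - 1)"
proof -
  have "(\<Prod>c\<in>{1..n}. card (Inc_prefs n i c)) =
        (\<Prod>c\<in>{1..i-1}. card (Inc_prefs n i c)) * (\<Prod>c\<in>{i..n}. card (Inc_prefs n i c))"
  proof -
    have "{1..n} = {1..i-1} \<union> {i..n}" using assms by auto
    then show ?thesis by (simp add: prod.union_disjoint)
  qed
  also have "(\<Prod>c\<in>{1..i-1}. card (Inc_prefs n i c)) = (\<Prod>c\<in>{1..i-1}. c)"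
    by (rule prod.cong) (auto simp: Inc_prefs_def)
  also have "(\<Prod>c\<in>{i..n}. card (Inc_prefs n i c)) = (\<Prod>c\<in>{i..n}. c + 1 - i)"
    by (rule prod.cong) (auto simp: Inc_prefs_def)
  also have "\<dots> = (\<Prod>c\<in>{1..n+1-i}. c)"
    by (rule prod.reindex_bij_witness[where i="\<lambda>c. c + i - 1" and j="\<lambda>c. c + 1 - i"])
      (use assms in auto)
  finally show ?thesis by (simp add: fact_prod mult.commute)
qed

theorem proposition3p1:
  fixes n i :: nat
  assumes "i \<in> {1..n}"
  shows "card {p \<in> PF n. outcome n p = Inc n i} = fact (n + 1 - i) * fact (i - 1)"
proof -
  have i: "1 \<le> i" "i \<le> n" using assms by auto
  have "card {p \<in> PF n. outcome n p = Inc n i} = (\<Prod>c\<in>{1..n}. card (Inc_prefs n i c))"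
    by (simp add: PF_outcome_Inc_eq_PiE[OF i] card_PiE)
  also have "\<dots> = fact (n + 1 - i) * fact (i - 1)" by (rule prod_card_Inc_prefs[OF i])
  finally show ?thesis .
qed

end
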